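(* There is a constant $C$ depending only on $n$ such that the following holds. Let $u$ be a function on $\mathbb{R}^n\times(-\infty,0]$ with $\int_{S_\rho}u^2\,d\bar\gamma<\infty$ for all $\rho>0$, and suppose $P_1\in\mathcal P_{\mathrm{sing}}$ satisfies $N_{\mathrm{sing}}(u,1)=\big(\int_{S_1}|u-P_1|^2\,d\bar\gamma\big)^{1/2}$. Then for every $\rho\ge1$, $$\Big(\frac{1}{\rho^4}\int_{S_\rho}|u-P_1|^2\,d\bar\gamma\Big)^{1/2}\le C\int_1^{2\rho}\frac{M_{\mathrm{sing}}(u,s)}{s}\,ds,$$ and for every $\rho\le1$, $$\Big(\frac{1}{\rho^4}\int_{S_\rho}|u-P_1|^2\,d\bar\gamma\Big)^{1/2}\le C\int_{2\rho}^3\frac{M_{\mathrm{sing}}(u,s)}{s}\,ds.$$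
   Context: Notation. $S_r=\mathbb{R}^n\times(-r^2,0]$; $G(x,t)=(4\pi t)^{-n/2}e^{-|x|^2/(4t)}$ for $t>0$; $d\bar\gamma=\frac{G(x,-t)}{-t}\,dx\,dt$ on $\mathbb{R}^n\times(-\infty,0)$. $\mathcal P_{\mathrm{sing}}$: the set of functions $P(x,t)=\frac12x^TQx+mt$ with $Q$ a symmetric $n\times n$ matrix, $m\in[-1,0]$, $P\ge0$ on $\mathbb{R}^n\times(-\infty,0]$, $\Delta P-P_t=1$. $N_{\mathrm{sing}}(u,\rho)=\inf_{P\in\mathcal P_{\mathrm{sing}}}\big(\rho^{-4}\int_{S_\rho}|u-P|^2\,d\bar\gamma\big)^{1/2}$ and $M_{\mathrm{sing}}(u,\rho)=\sup_{r\in(0,\rho]}N_{\mathrm{sing}}(u,r)$. *)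

theory Defs
  imports "HOL-Analysis.Analysis"
begin

text \<open>Points of space-time are pairs (x,t) with x in R^n (n = CARD('n)) and t real.\<close>

definition heat_kernel :: "real ^ 'n \<Rightarrow> real \<Rightarrow> real" where
  "heat_kernel x t = (if t > 0 then (4 * pi * t) powr (- real CARD('n) / 2) * exp (- (norm x)\<^sup>2 / (4 * t)) else 0)"

definition gamma_bar :: "((real ^ 'n) \<times> real) measure" where
  "gamma_bar = density lebesgue
     (\<lambda>(x, t). if t < 0 then ennreal (heat_kernel x (- t) / (- t)) else 0)"

definition S_cyl :: "real \<Rightarrow> ((real ^ 'n) \<times> real) set" where
  "S_cyl r = {(x, t). - (r\<^sup>2) < t \<and> t \<le> 0}"

definition enn_sqrt :: "ennreal \<Rightarrow> ennreal" where
  "enn_sqrt a = (if a = \<infinity> then \<infinity> else ennreal (sqrt (enn2real a)))"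

definition laplacian_x :: "((real ^ 'n) \<times> real \<Rightarrow> real) \<Rightarrow> real ^ 'n \<Rightarrow> real \<Rightarrow> real" where
  "laplacian_x f x t = (\<Sum>i\<in>UNIV. deriv (deriv (\<lambda>s. f (x + s *\<^sub>R axis i 1, t))) 0)"

definition time_deriv :: "((real ^ 'n) \<times> real \<Rightarrow> real) \<Rightarrow> real ^ 'n \<Rightarrow> real \<Rightarrow> real" where
  "time_deriv f x t = deriv (\<lambda>s. f (x, s)) t"

definition P_sing :: "((real ^ 'n) \<times> real \<Rightarrow> real) set" where
  "P_sing = {P. \<exists>(Q :: real ^ 'n ^ 'n) (m :: real).
      transpose Q = Q \<and>
      P = (\<lambda>(x, t). (1/2) * (x \<bullet> (Q *v x)) + m * t) \<and>
      m \<in> {-1..0} \<and>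
      (\<forall>x t. t \<le> 0 \<longrightarrow> P (x, t) \<ge> 0) \<and>
      (\<forall>x t. laplacian_x P x t - time_deriv P x t = 1)}"

definition weighted_dist :: "((real ^ 'n) \<times> real \<Rightarrow> real) \<Rightarrow> ((real ^ 'n) \<times> real \<Rightarrow> real) \<Rightarrow> real \<Rightarrow> ennreal" where
  "weighted_dist u P \<rho> = enn_sqrt (ennreal (1 / \<rho> ^ 4) *
      (\<integral>\<^sup>+ z \<in> S_cyl \<rho>. ennreal ((u z - P z)\<^sup>2) \<partial>gamma_bar))"

definition N_sing :: "((real ^ 'n) \<times> real \<Rightarrow> real) \<Rightarrow> real \<Rightarrow> ennreal" where
  "N_sing u \<rho> = (INF P\<in>P_sing. weighted_dist u P \<rho>)"

definition M_sing :: "((real ^ 'n) \<times> real \<Rightarrow> real) \<Rightarrow> real \<Rightarrow> ennreal" where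
  "M_sing u \<rho> = (SUP r\<in>{0<..\<rho>}. N_sing u r)"

end

theory Submission
  imports Defs
begin

text \<open>
  Write \<open>\<parallel>f\<parallel>_\<rho>\<close> for the scale-invariant norm
  (rho^-4 * integral over S_rho of f^2 d gamma_bar)^(1/2), so that
  \<open>weighted_dist u P \<rho> = \<parallel>u - P\<parallel>_\<rho>\<close>.  Three properties of this norm drive everything:
  (1) it does not depend on rho for parabolically 2-homogeneous functions, in particular
      for differences of elements of \<open>P_sing\<close>: under the parabolic scaling
      (x,t) |-> (r x, r^2 t) the measure gamma_bar dilates exactly like Lebesgue measure
      on the cylinder S_1, and the factor rho^-4 compensates the growth of f^2;
  (2) it satisfies the triangle inequality (Minkowski's inequality in L^2);
  (3) it grows at most by the factor 4 when passing to a comparable radius r <= R <= 2r.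
  Along a chain of radii r_0 = 1, ..., r_K with consecutive ratios at most 2 and
  near-optimal polynomials P_j at radius r_j, telescoping gives
  \<open>\<parallel>u - P1\<parallel>_(r_K) <= 9 * sum_j N_sing u r_j\<close>.
  Choosing dyadic radii (upwards for rho >= 1, downwards for rho <= 1), each term
  N_sing u r_j is at most M_sing u b_j, which is bounded by 3 times the integral of
  M_sing u s / s over [b_j, 3 b_j / 2]; these pieces are pairwise disjoint and lie in the
  integration range.
\<close>

section \<open>The measure \<open>gamma_bar\<close> and parabolic scaling\<close>

definition gamma_density :: "(real ^ 'n) \<times> real \<Rightarrow> ennreal" where
  "gamma_density = (\<lambda>(x, t). if t < 0 then ennreal (heat_kernel x (- t) / (- t)) else 0)"

lemma gamma_bar_density: "gamma_bar = density lebesgue gamma_density"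
  unfolding gamma_bar_def gamma_density_def ..

lemma borel_measurable_lebesgueI:
  "f \<in> borel_measurable borel \<Longrightarrow> f \<in> borel_measurable (lebesgue :: 'a::euclidean_space measure)"
  by (rule measurable_completion) simp

text \<open>The density is continuous on the open half-space \<open>t < 0\<close> and vanishes elsewhere.\<close>
lemma gamma_density_measurable[measurable]:
  "(gamma_density :: _ \<Rightarrow> ennreal) \<in> borel_measurable (lebesgue :: ((real^'n)\<times>real) measure)"
proof (rule borel_measurable_lebesgueI)
  define g where "g = (\<lambda>z::(real^'n)\<times>real. (4 * pi * (- snd z)) powr (- real CARD('n) / 2)
      * exp (- (norm (fst z))\<^sup>2 / (4 * (- snd z))) / (- snd z))"
  have e: "(gamma_density :: (real^'n)\<times>real \<Rightarrow> ennreal)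
      = (\<lambda>z. if z \<in> {z. snd z < 0} then ennreal (g z) else 0)"
    by (auto simp: gamma_density_def heat_kernel_def g_def fun_eq_iff split: prod.splits)
  have "open {z::(real^'n)\<times>real. snd z < 0}"
    by (intro open_Collect_less continuous_intros)
  moreover have "continuous_on {z. snd z < 0} (\<lambda>z. ennreal (g z))"
    unfolding g_def by (intro continuous_on_ennreal continuous_intros) auto
  ultimately show "(gamma_density :: (real^'n)\<times>real \<Rightarrow> ennreal) \<in> borel_measurable borel"
    unfolding e by (rule_tac borel_measurable_continuous_on_if) (auto simp: borel_open)
qed

lemma measurable_gamma_bar:
  "f \<in> borel_measurable lebesgue \<Longrightarrow> f \<in> borel_measurable (gamma_bar :: ((real^'n)\<times>real) measure)"
  unfolding gamma_bar_density by (subst measurable_cong_sets[OF sets_density refl]) auto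

lemma S_cyl_measurable[measurable]: "S_cyl r \<in> sets (lebesgue :: ((real^'n)\<times>real) measure)"
proof -
  have "S_cyl r = {z::(real^'n)\<times>real. - (r\<^sup>2) < snd z} \<inter> {z. snd z \<le> 0}"
    by (auto simp: S_cyl_def)
  moreover have "open {z::(real^'n)\<times>real. - (r\<^sup>2) < snd z}"
    by (intro open_Collect_less continuous_intros)
  moreover have "closed {z::(real^'n)\<times>real. snd z \<le> 0}"
    by (intro closed_Collect_le continuous_intros)
  ultimately have "S_cyl r \<in> sets (borel :: ((real^'n)\<times>real) measure)"
    by (metis borel_open borel_closed sets.Int)
  then show ?thesis by (metis sets_completionI_sets sets_lborel)
qed

definition par_scale :: "real \<Rightarrow> (real^'n)\<times>real \<Rightarrow> (real^'n)\<times>real" where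
  "par_scale r z = (r *\<^sub>R fst z, r\<^sup>2 * snd z)"

lemma par_scale_diagonal:
  fixes z :: "(real^'n)\<times>real"
  shows "0 + (\<Sum>j\<in>Basis. ((if snd j = 0 then r else r\<^sup>2) * (z \<bullet> j)) *\<^sub>R j) = par_scale r z"
proof (rule euclidean_eqI)
  fix b :: "(real^'n)\<times>real" assume b: "b \<in> Basis"
  have "(0 + (\<Sum>j\<in>Basis. ((if snd j = 0 then r else r\<^sup>2) * (z \<bullet> j)) *\<^sub>R j)) \<bullet> b
     = (if snd b = 0 then r else r\<^sup>2) * (z \<bullet> b)"
    using b by (simp add: inner_sum_left inner_Basis if_distrib[of "\<lambda>x. _ * x"] sum.delta cong: if_cong)
  also have "\<dots> = par_scale r z \<bullet> b"
    using b by (cases z) (auto simp: par_scale_def Basis_prod_def)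
  finally show "(0 + (\<Sum>j\<in>Basis. ((if snd j = 0 then r else r\<^sup>2) * (z \<bullet> j)) *\<^sub>R j)) \<bullet> b
      = par_scale r z \<bullet> b" .
qed

lemma par_scale_jacobian:
  fixes r :: real
  assumes "r > 0"
  shows "(\<Prod>j\<in>(Basis :: ((real^'n)\<times>real) set). \<bar>if snd j = 0 then r else r\<^sup>2\<bar>) = r ^ (CARD('n) + 2)"
proof -
  have ar: "\<bar>r\<bar> = r" using assms by (rule abs_of_pos)
  have d: "(\<lambda>u. (u, 0::real)) ` (Basis :: (real^'n) set) \<inter> (\<lambda>v. (0::real^'n, v)) ` (Basis :: real set) = {}"
    by auto
  have "(\<Prod>j\<in>(Basis :: ((real^'n)\<times>real) set). \<bar>if snd j = 0 then r else r\<^sup>2\<bar>)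
     = (\<Prod>j\<in>(\<lambda>u. (u, 0::real)) ` (Basis :: (real^'n) set). \<bar>if snd j = 0 then r else r\<^sup>2\<bar>) *
       (\<Prod>j\<in>(\<lambda>v. (0::real^'n, v)) ` (Basis :: real set). \<bar>if snd j = 0 then r else r\<^sup>2\<bar>)"
    unfolding Basis_prod_def by (subst prod.union_disjoint) (use d ar in \<open>auto simp: Basis_real_def\<close>)
  also have "\<dots> = r ^ CARD('n) * r\<^sup>2"
    using assms by (simp add: prod.reindex inj_on_def Basis_real_def)
  finally show ?thesis by (simp add: power_add power2_eq_square)
qed

lemma nn_integral_par_scale:
  fixes f :: "(real^'n)\<times>real \<Rightarrow> ennreal"
  assumes r: "r > 0" and f[measurable]: "f \<in> borel_measurable lebesgue"
  shows "(\<integral>\<^sup>+z. f z \<partial>lebesgue) = ennreal (r ^ (CARD('n) + 2)) * (\<integral>\<^sup>+z. f (par_scale r z) \<partial>lebesgue)"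
proof -
  define c :: "(real^'n)\<times>real \<Rightarrow> real" where "c j = (if snd j = 0 then r else r\<^sup>2)" for j
  have c: "\<And>j. j \<in> Basis \<Longrightarrow> c j \<noteq> 0" using r by (auto simp: c_def)
  define T where "T = (\<lambda>x::(real^'n)\<times>real. 0 + (\<Sum>j\<in>Basis. (c j * (x \<bullet> j)) *\<^sub>R j))"
  have T: "T = par_scale r"
    using par_scale_diagonal unfolding c_def T_def by (auto simp: fun_eq_iff simp del: add_0)
  have J: "(\<Prod>j\<in>Basis. \<bar>c j\<bar>) = r ^ (CARD('n) + 2)"
    unfolding c_def by (rule par_scale_jacobian[OF r])
  have leb: "lebesgue = density (distr lebesgue lebesgue T) (\<lambda>_. (\<Prod>j\<in>Basis. \<bar>c j\<bar>))"
    unfolding T_def by (rule lebesgue_affine_euclidean(1)) (rule c)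
  have Tm: "T \<in> lebesgue \<rightarrow>\<^sub>M lebesgue"
    unfolding T_def by (rule lebesgue_affine_measurable) (rule c)
  have "(\<integral>\<^sup>+z. f z \<partial>lebesgue) = (\<integral>\<^sup>+z. f z \<partial>density (distr lebesgue lebesgue T) (\<lambda>_. (\<Prod>j\<in>Basis. \<bar>c j\<bar>)))"
    using arg_cong[of _ _ "\<lambda>M. integral\<^sup>N M f", OF leb] .
  also have "\<dots> = (\<integral>\<^sup>+z. ennreal (\<Prod>j\<in>Basis. \<bar>c j\<bar>) * f z \<partial>distr lebesgue lebesgue T)"
    by (rule nn_integral_density) (simp_all add: measurable_distr_eq1)
  also have "\<dots> = ennreal (\<Prod>j\<in>Basis. \<bar>c j\<bar>) * (\<integral>\<^sup>+z. f z \<partial>distr lebesgue lebesgue T)"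
    by (rule nn_integral_cmult) (simp add: measurable_distr_eq1)
  also have "(\<integral>\<^sup>+z. f z \<partial>distr lebesgue lebesgue T) = (\<integral>\<^sup>+z. f (T z) \<partial>lebesgue)"
    by (rule nn_integral_distr[OF Tm]) (simp add: measurable_distr_eq1)
  finally show ?thesis unfolding T J .
qed

lemma heat_kernel_scale:
  fixes x :: "real^'n"
  assumes r: "r > 0" and s: "s > 0"
  shows "heat_kernel (r *\<^sub>R x) (r\<^sup>2 * s) / (r\<^sup>2 * s) = (1 / r ^ (CARD('n) + 2)) * (heat_kernel x s / s)"
proof -
  have rs: "r\<^sup>2 * s > 0" using r s by simp
  have "(r\<^sup>2) powr (- real CARD('n) / 2) = (r powr 2) powr (- real CARD('n) / 2)"
    using r by (simp add: powr_realpow)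
  also have "\<dots> = r powr (- real CARD('n))" by (simp add: powr_powr)
  also have "\<dots> = 1 / r ^ CARD('n)"
    using r by (simp add: powr_minus powr_realpow divide_inverse)
  finally have q: "(r\<^sup>2) powr (- real CARD('n) / 2) = 1 / r ^ CARD('n)" .
  have p: "(4 * pi * (r\<^sup>2 * s)) powr (- real CARD('n) / 2)
      = (r\<^sup>2) powr (- real CARD('n) / 2) * (4 * pi * s) powr (- real CARD('n) / 2)"
    using r s by (simp add: powr_mult[symmetric] mult_ac)
  have e: "- (norm (r *\<^sub>R x))\<^sup>2 / (4 * (r\<^sup>2 * s)) = - (norm x)\<^sup>2 / (4 * s)"
    using r s by (simp add: power_mult_distrib field_simps)
  have "heat_kernel (r *\<^sub>R x) (r\<^sup>2 * s) = (1 / r ^ CARD('n)) * heat_kernel x s"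
    unfolding heat_kernel_def if_P[OF rs] if_P[OF s] p q e by simp
  then show ?thesis
    using r s by (simp add: power_add divide_simps power2_eq_square)
qed

lemma gamma_density_scale:
  assumes r: "r > 0"
  shows "gamma_density (par_scale r z) = ennreal (1 / r ^ (CARD('n) + 2)) * gamma_density (z :: (real^'n)\<times>real)"
proof -
  obtain x t where z: "z = (x, t)" by (cases z)
  show ?thesis
  proof (cases "t < 0")
    case True
    have "r\<^sup>2 * t < 0" using True r by (simp add: mult_pos_neg)
    then have "gamma_density (par_scale r z) = ennreal (heat_kernel (r *\<^sub>R x) (r\<^sup>2 * (- t)) / (r\<^sup>2 * (- t)))"
      by (simp add: z gamma_density_def par_scale_def)
    also have "\<dots> = ennreal (1 / r ^ (CARD('n) + 2)) * ennreal (heat_kernel x (-t) / (-t))"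
      unfolding heat_kernel_scale[OF r, of "-t" x, OF neg_0_less_iff_less[THEN iffD2, OF True]]
      using r True by (intro ennreal_mult) (auto simp: heat_kernel_def divide_nonneg_neg)
    finally show ?thesis using True by (simp add: z gamma_density_def)
  next
    case False
    then have "\<not> r\<^sup>2 * t < 0" using r by (simp add: mult_less_0_iff)
    then show ?thesis using False by (simp add: z gamma_density_def par_scale_def)
  qed
qed

lemma S_cyl_par_scale:
  assumes r: "r > 0"
  shows "indicator (S_cyl r) (par_scale r z) = (indicator (S_cyl 1) z :: ennreal)"
proof -
  have r2: "r\<^sup>2 > 0" using r by simp
  have "- (r\<^sup>2) < r\<^sup>2 * t \<longleftrightarrow> -1 < t" for t
    using mult_less_cancel_left_pos[OF r2, of "-1" t] by simp
  moreover have "r\<^sup>2 * t \<le> 0 \<longleftrightarrow> t \<le> 0" for t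
    using r2 by (simp add: mult_le_0_iff)
  ultimately have "(- (r\<^sup>2) < r\<^sup>2 * t \<and> r\<^sup>2 * t \<le> 0) \<longleftrightarrow> (- 1 < t \<and> t \<le> 0)" for t
    by blast
  then show ?thesis by (cases z) (simp add: indicator_def S_cyl_def par_scale_def)
qed

text \<open>For a parabolically 2-homogeneous f, the weighted L^2 mass on S_r is r^4 times that
  on S_1: the integrand contributes r^4, the weight r^-(n+2) and the Jacobian r^(n+2).\<close>
lemma cyl_integral_homogeneous:
  fixes f :: "(real^'n)\<times>real \<Rightarrow> real"
  assumes r: "r > 0" and fm[measurable]: "f \<in> borel_measurable lebesgue"
    and hom: "\<And>z. f (par_scale r z) = r\<^sup>2 * f z"
  shows "(\<integral>\<^sup>+ z\<in>S_cyl r. ennreal ((f z)\<^sup>2) \<partial>gamma_bar)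
       = ennreal (r ^ 4) * (\<integral>\<^sup>+ z\<in>S_cyl 1. ennreal ((f z)\<^sup>2) \<partial>gamma_bar)"
proof -
  define F where "F \<rho> z = gamma_density z * (ennreal ((f z)\<^sup>2) * indicator (S_cyl \<rho>) z)" for \<rho> z
  have Fm: "\<And>\<rho>. F \<rho> \<in> borel_measurable lebesgue" unfolding F_def by measurable
  have I: "\<And>\<rho>. (\<integral>\<^sup>+ z\<in>S_cyl \<rho>. ennreal ((f z)\<^sup>2) \<partial>gamma_bar) = (\<integral>\<^sup>+ z. F \<rho> z \<partial>lebesgue)"
    unfolding gamma_bar_density F_def by (rule nn_integral_density) measurable
  have scale: "F r (par_scale r z) = ennreal (r ^ 4 / r ^ (CARD('n) + 2)) * F 1 z" for z
  proof -
    have a: "ennreal ((f (par_scale r z))\<^sup>2) = ennreal (r ^ 4) * ennreal ((f z)\<^sup>2)"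
      unfolding hom by (simp add: power_mult_distrib ennreal_mult[symmetric])
    have b: "ennreal (r ^ 4 / r ^ (CARD('n) + 2)) = ennreal (1 / r ^ (CARD('n) + 2)) * ennreal (r ^ 4)"
      using r by (simp add: ennreal_mult[symmetric])
    show ?thesis
      unfolding F_def gamma_density_scale[OF r] S_cyl_par_scale[OF r] a b by (simp add: mult_ac)
  qed
  have cancel: "ennreal (r ^ (CARD('n) + 2)) * ennreal (r ^ 4 / r ^ (CARD('n) + 2)) = ennreal (r ^ 4)"
    using r by (simp add: ennreal_mult[symmetric])
  have "(\<integral>\<^sup>+ z. F r z \<partial>lebesgue) = ennreal (r ^ (CARD('n) + 2)) * (\<integral>\<^sup>+ z. F r (par_scale r z) \<partial>lebesgue)"
    by (rule nn_integral_par_scale[OF r Fm])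
  also have "(\<integral>\<^sup>+ z. F r (par_scale r z) \<partial>lebesgue)
      = ennreal (r ^ 4 / r ^ (CARD('n) + 2)) * (\<integral>\<^sup>+ z. F 1 z \<partial>lebesgue)"
    unfolding scale by (rule nn_integral_cmult[OF Fm])
  finally show ?thesis unfolding I by (simp only: mult.assoc[symmetric] cancel)
qed

lemma enn_sqrt_top[simp]: "enn_sqrt top = top"
  by (simp add: enn_sqrt_def)

lemma enn_sqrt_ennreal: "x \<ge> 0 \<Longrightarrow> enn_sqrt (ennreal x) = ennreal (sqrt x)"
  by (simp add: enn_sqrt_def)

lemma enn_sqrt_mono: "a \<le> b \<Longrightarrow> enn_sqrt a \<le> enn_sqrt b"
proof (cases "b = top")
  case False
  assume ab: "a \<le> b"
  then have "a \<noteq> top" using False top_unique by auto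
  moreover have "enn2real a \<le> enn2real b"
    using ab False by (intro enn2real_mono) (auto simp: top.not_eq_extremum)
  ultimately show ?thesis using False by (simp add: enn_sqrt_def)
qed simp

lemma enn_sqrt_cmult:
  assumes c: "c \<ge> 0"
  shows "enn_sqrt (ennreal (c\<^sup>2) * X) = ennreal c * enn_sqrt X"
proof (cases X)
  case (real x)
  then have "ennreal (c\<^sup>2) * X = ennreal (c\<^sup>2 * x)" using c by (simp add: ennreal_mult)
  moreover have "enn_sqrt (ennreal (c\<^sup>2 * x)) = ennreal (c * sqrt x)"
    using real c by (simp add: enn_sqrt_ennreal real_sqrt_mult)
  moreover have "ennreal (c * sqrt x) = ennreal c * enn_sqrt X"
    using real c by (simp add: enn_sqrt_ennreal ennreal_mult)
  ultimately show ?thesis by simp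
next
  case top
  then show ?thesis using c by (cases "c = 0") (auto simp: ennreal_mult_top enn_sqrt_def)
qed

section \<open>Minkowski's inequality in L^2\<close>

lemma sq_sum_le_weighted:
  fixes x y l :: real
  assumes l: "l > 0"
  shows "(x + y)\<^sup>2 \<le> (1 + l) * x\<^sup>2 + (1 + 1 / l) * y\<^sup>2"
proof -
  have "0 \<le> (l * x - y)\<^sup>2 / l" using l by simp
  also have "(l * x - y)\<^sup>2 / l = l * x\<^sup>2 - 2 * x * y + y\<^sup>2 / l"
    using l by (simp add: power2_eq_square field_simps)
  finally have "2 * x * y \<le> l * x\<^sup>2 + y\<^sup>2 / l" by simp
  then show ?thesis by (simp add: power2_eq_square algebra_simps)
qed

text \<open>The choice l = (b + d)/(a + d) in the weighted Young inequality is almost optimal: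
  it yields (a + b)^2 up to an error d (a + b).  (For d = 0 this would be l = b/a,
  which is undefined when a = 0.)\<close>
lemma weighted_young_near_optimal:
  fixes a b d :: real
  assumes a: "a \<ge> 0" and b: "b \<ge> 0" and d: "d > 0"
  shows "(1 + (b + d) / (a + d)) * a\<^sup>2 + (1 + 1 / ((b + d) / (a + d))) * b\<^sup>2 \<le> (a + b)\<^sup>2 + d * (a + b)"
proof -
  have ad: "a + d > 0" and bd: "b + d > 0" using a b d by auto
  have "a\<^sup>2 * (b + d) \<le> a * (b + d) * (a + d)"
    using a b d by (simp add: power2_eq_square mult_left_mono algebra_simps)
  then have 1: "a\<^sup>2 * ((b + d) / (a + d)) \<le> a * (b + d)"
    using ad by (simp add: divide_simps mult_ac)
  have "b\<^sup>2 * (a + d) \<le> b * (a + d) * (b + d)"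
    using a b d by (simp add: power2_eq_square mult_left_mono algebra_simps)
  then have 2: "b\<^sup>2 * ((a + d) / (b + d)) \<le> b * (a + d)"
    using bd by (simp add: divide_simps mult_ac)
  have "(1 + (b + d) / (a + d)) * a\<^sup>2 + (1 + 1 / ((b + d) / (a + d))) * b\<^sup>2
      = a\<^sup>2 + b\<^sup>2 + a\<^sup>2 * ((b + d) / (a + d)) + b\<^sup>2 * ((a + d) / (b + d))"
    by (simp add: algebra_simps)
  also have "\<dots> \<le> a\<^sup>2 + b\<^sup>2 + a * (b + d) + b * (a + d)" using 1 2 by linarith
  also have "\<dots> = (a + b)\<^sup>2 + d * (a + b)" by (simp add: power2_eq_square algebra_simps)
  finally show ?thesis .
qed

lemma nn_integral_sq_sum_le:
  fixes l :: real
  assumes l: "l > 0" and [measurable]: "f \<in> borel_measurable M" "g \<in> borel_measurable M"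
  shows "(\<integral>\<^sup>+ z. ennreal ((f z + g z)\<^sup>2) \<partial>M)
       \<le> ennreal (1 + l) * (\<integral>\<^sup>+ z. ennreal ((f z)\<^sup>2) \<partial>M) + ennreal (1 + 1 / l) * (\<integral>\<^sup>+ z. ennreal ((g z)\<^sup>2) \<partial>M)"
proof -
  have "(\<integral>\<^sup>+ z. ennreal ((f z + g z)\<^sup>2) \<partial>M)
      \<le> (\<integral>\<^sup>+ z. ennreal (1 + l) * ennreal ((f z)\<^sup>2) + ennreal (1 + 1 / l) * ennreal ((g z)\<^sup>2) \<partial>M)"
  proof (rule nn_integral_mono)
    fix z
    have "ennreal ((f z + g z)\<^sup>2) \<le> ennreal ((1 + l) * (f z)\<^sup>2 + (1 + 1 / l) * (g z)\<^sup>2)"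
      using sq_sum_le_weighted[OF l] by (rule ennreal_leI)
    also have "\<dots> = ennreal (1 + l) * ennreal ((f z)\<^sup>2) + ennreal (1 + 1 / l) * ennreal ((g z)\<^sup>2)"
      using l by (simp add: ennreal_plus ennreal_mult'')
    finally show "ennreal ((f z + g z)\<^sup>2)
        \<le> ennreal (1 + l) * ennreal ((f z)\<^sup>2) + ennreal (1 + 1 / l) * ennreal ((g z)\<^sup>2)" .
  qed
  also have "\<dots> = ennreal (1 + l) * (\<integral>\<^sup>+ z. ennreal ((f z)\<^sup>2) \<partial>M) + ennreal (1 + 1 / l) * (\<integral>\<^sup>+ z. ennreal ((g z)\<^sup>2) \<partial>M)"
    by (simp add: nn_integral_add nn_integral_cmult)
  finally show ?thesis .
qed

lemma minkowski_L2:
  assumes [measurable]: "f \<in> borel_measurable M" "g \<in> borel_measurable M"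
  shows "enn_sqrt (\<integral>\<^sup>+ z. ennreal ((f z + g z)\<^sup>2) \<partial>M)
     \<le> enn_sqrt (\<integral>\<^sup>+ z. ennreal ((f z)\<^sup>2) \<partial>M) + enn_sqrt (\<integral>\<^sup>+ z. ennreal ((g z)\<^sup>2) \<partial>M)"
proof -
  define A where "A = (\<integral>\<^sup>+ z. ennreal ((f z)\<^sup>2) \<partial>M)"
  define B where "B = (\<integral>\<^sup>+ z. ennreal ((g z)\<^sup>2) \<partial>M)"
  show ?thesis
  proof (cases "A = top \<or> B = top")
    case True then show ?thesis unfolding A_def[symmetric] B_def[symmetric] by auto
  next
    case False
    then obtain a b where a: "a \<ge> 0" "A = ennreal (a\<^sup>2)" and b: "b \<ge> 0" "B = ennreal (b\<^sup>2)"
      by (metis ennreal_cases real_sqrt_ge_zero real_sqrt_pow2)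
    have main: "(\<integral>\<^sup>+ z. ennreal ((f z + g z)\<^sup>2) \<partial>M) \<le> ennreal ((a + b)\<^sup>2)"
    proof (rule ennreal_le_epsilon)
      fix e :: real assume e: "0 < e"
      define d where "d = e / (a + b + 1)"
      have d: "d > 0" using e a b by (simp add: d_def)
      have "d * (a + b) \<le> d * (a + b + 1)" using d by simp
      also have "\<dots> = e" using a b by (simp add: d_def)
      finally have de: "d * (a + b) \<le> e" .
      define l where "l = (b + d) / (a + d)"
      have l: "l > 0" using a b d by (simp add: l_def)
      have "(\<integral>\<^sup>+ z. ennreal ((f z + g z)\<^sup>2) \<partial>M) \<le> ennreal (1 + l) * A + ennreal (1 + 1 / l) * B"
        unfolding A_def B_def by (rule nn_integral_sq_sum_le[OF l]) measurable
      also have "\<dots> = ennreal ((1 + l) * a\<^sup>2 + (1 + 1 / l) * b\<^sup>2)"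
        using l unfolding a(2) b(2) by (simp add: ennreal_plus ennreal_mult'')
      also have "\<dots> \<le> ennreal ((a + b)\<^sup>2 + e)"
        using weighted_young_near_optimal[OF a(1) b(1) d] de unfolding l_def
        by (intro ennreal_leI) linarith
      also have "\<dots> = ennreal ((a + b)\<^sup>2) + ennreal e"
        using e by (simp add: ennreal_plus)
      finally show "(\<integral>\<^sup>+ z. ennreal ((f z + g z)\<^sup>2) \<partial>M) \<le> ennreal ((a + b)\<^sup>2) + ennreal e" .
    qed
    have "enn_sqrt (\<integral>\<^sup>+ z. ennreal ((f z + g z)\<^sup>2) \<partial>M) \<le> enn_sqrt (ennreal ((a + b)\<^sup>2))"
      by (rule enn_sqrt_mono[OF main])
    also have "\<dots> = enn_sqrt A + enn_sqrt B"
      using a b by (simp add: enn_sqrt_ennreal ennreal_plus)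
    finally show ?thesis unfolding A_def B_def .
  qed
qed

section \<open>The scale-invariant norm on parabolic cylinders\<close>

definition scaled_norm :: "((real ^ 'n) \<times> real \<Rightarrow> real) \<Rightarrow> real \<Rightarrow> ennreal" where
  "scaled_norm f \<rho> = enn_sqrt (ennreal (1 / \<rho> ^ 4) * (\<integral>\<^sup>+ z \<in> S_cyl \<rho>. ennreal ((f z)\<^sup>2) \<partial>gamma_bar))"

lemma weighted_dist_eq_scaled_norm: "weighted_dist u P \<rho> = scaled_norm (\<lambda>z. u z - P z) \<rho>"
  unfolding weighted_dist_def scaled_norm_def ..

lemma scaled_norm_minus_commute: "scaled_norm (\<lambda>z. a z - b z) \<rho> = scaled_norm (\<lambda>z. b z - a z) \<rho>"
  unfolding scaled_norm_def by (simp add: power2_commute)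

lemma scaled_norm_as_L2:
  fixes h :: "(real^'n)\<times>real \<Rightarrow> real"
  assumes [measurable]: "h \<in> borel_measurable lebesgue"
  shows "scaled_norm h \<rho> = enn_sqrt (\<integral>\<^sup>+ z. ennreal ((1 / \<rho>\<^sup>2 * indicator (S_cyl \<rho>) z * h z)\<^sup>2) \<partial>gamma_bar)"
proof -
  have m: "(\<lambda>z. ennreal ((h z)\<^sup>2) * indicator (S_cyl \<rho>) z) \<in> borel_measurable (gamma_bar :: ((real^'n)\<times>real) measure)"
    by (intro measurable_gamma_bar) measurable
  have pointwise: "ennreal (1 / \<rho> ^ 4) * (ennreal ((h z)\<^sup>2) * indicator (S_cyl \<rho>) z)
      = ennreal ((1 / \<rho>\<^sup>2 * indicator (S_cyl \<rho>) z * h z)\<^sup>2)" for z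
  proof (cases "z \<in> S_cyl \<rho>")
    case True
    have e: "(1 / \<rho>\<^sup>2 * indicator (S_cyl \<rho>) z * h z)\<^sup>2 = 1 / \<rho> ^ 4 * (h z)\<^sup>2"
      using True by (simp add: power_mult_distrib power_divide power_mult[symmetric])
    show ?thesis unfolding e by (subst ennreal_mult'') (simp_all add: True)
  qed simp
  have "ennreal (1 / \<rho> ^ 4) * (\<integral>\<^sup>+ z\<in>S_cyl \<rho>. ennreal ((h z)\<^sup>2) \<partial>gamma_bar)
      = (\<integral>\<^sup>+ z. ennreal (1 / \<rho> ^ 4) * (ennreal ((h z)\<^sup>2) * indicator (S_cyl \<rho>) z) \<partial>gamma_bar)"
    by (rule nn_integral_cmult[OF m, symmetric])
  then show ?thesis unfolding scaled_norm_def pointwise by simp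
qed

lemma scaled_norm_triangle:
  fixes f g :: "(real^'n)\<times>real \<Rightarrow> real"
  assumes [measurable]: "f \<in> borel_measurable lebesgue" "g \<in> borel_measurable lebesgue"
  shows "scaled_norm (\<lambda>z. f z + g z) \<rho> \<le> scaled_norm f \<rho> + scaled_norm g \<rho>"
proof -
  have fg: "(\<lambda>z. f z + g z) \<in> borel_measurable lebesgue" by measurable
  have "scaled_norm (\<lambda>z. f z + g z) \<rho> = enn_sqrt (\<integral>\<^sup>+ z. ennreal ((1 / \<rho>\<^sup>2 * indicator (S_cyl \<rho>) z * f z
      + 1 / \<rho>\<^sup>2 * indicator (S_cyl \<rho>) z * g z)\<^sup>2) \<partial>gamma_bar)"
    by (simp only: scaled_norm_as_L2[OF fg] distrib_left)
  also have "\<dots> \<le> scaled_norm f \<rho> + scaled_norm g \<rho>"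
    unfolding scaled_norm_as_L2[OF assms(1)] scaled_norm_as_L2[OF assms(2)]
    by (rule minkowski_L2) (intro measurable_gamma_bar; measurable)+
  finally show ?thesis .
qed

text \<open>Passing to a comparable larger radius costs at most the factor 4 = 2^(4/2).\<close>
lemma scaled_norm_comparable_radii:
  fixes f :: "(real^'n)\<times>real \<Rightarrow> real"
  assumes r: "0 < r" "r \<le> R" "R \<le> 2 * r"
  shows "scaled_norm f r \<le> 4 * scaled_norm f R"
proof -
  have "r\<^sup>2 \<le> R\<^sup>2" using r by (intro power_mono) auto
  then have "S_cyl r \<subseteq> S_cyl R" by (auto simp: S_cyl_def)
  then have sub: "(\<integral>\<^sup>+ z\<in>S_cyl r. ennreal ((f z)\<^sup>2) \<partial>gamma_bar) \<le> (\<integral>\<^sup>+ z\<in>S_cyl R. ennreal ((f z)\<^sup>2) \<partial>gamma_bar)"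
    by (intro nn_integral_mono) (auto simp: indicator_def)
  have "R ^ 4 \<le> (2 * r) ^ 4" using r by (intro power_mono) auto
  then have "1 / r ^ 4 \<le> 4\<^sup>2 * (1 / R ^ 4)" using r by (simp add: divide_simps)
  then have "ennreal (1 / r ^ 4) \<le> ennreal (4\<^sup>2) * ennreal (1 / R ^ 4)"
    by (metis ennreal_leI ennreal_mult' zero_le_power2)
  then have "ennreal (1 / r ^ 4) * (\<integral>\<^sup>+ z\<in>S_cyl r. ennreal ((f z)\<^sup>2) \<partial>gamma_bar)
     \<le> ennreal (4\<^sup>2) * (ennreal (1 / R ^ 4) * (\<integral>\<^sup>+ z\<in>S_cyl R. ennreal ((f z)\<^sup>2) \<partial>gamma_bar))"
    unfolding mult.assoc[symmetric] by (intro mult_mono sub) auto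
  then have "scaled_norm f r
      \<le> enn_sqrt (ennreal (4\<^sup>2) * (ennreal (1 / R ^ 4) * (\<integral>\<^sup>+ z\<in>S_cyl R. ennreal ((f z)\<^sup>2) \<partial>gamma_bar)))"
    unfolding scaled_norm_def by (rule enn_sqrt_mono)
  also have "\<dots> = 4 * scaled_norm f R" unfolding scaled_norm_def by (subst enn_sqrt_cmult) simp_all
  finally show ?thesis .
qed

lemma P_sing_quadratic:
  assumes "P \<in> P_sing"
  obtains Q :: "real^'n^'n" and m where "P = (\<lambda>z. (1/2) * (fst z \<bullet> (Q *v fst z)) + m * snd z)"
  using assms unfolding P_sing_def by (auto simp: case_prod_beta')

lemma P_sing_measurable:
  assumes "(P :: (real^'n)\<times>real \<Rightarrow> real) \<in> P_sing"
  shows "P \<in> borel_measurable lebesgue"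
proof -
  obtain Q :: "real^'n^'n" and m where P: "P = (\<lambda>z. (1/2) * (fst z \<bullet> (Q *v fst z)) + m * snd z)"
    using P_sing_quadratic[OF assms] by blast
  have "continuous_on UNIV P"
    unfolding P by (intro continuous_intros continuous_on_compose2[of UNIV "(*v) Q"]
        matrix_vector_mult_linear_continuous_on) auto
  then show ?thesis by (intro borel_measurable_lebesgueI borel_measurable_continuous_onI)
qed

lemma P_sing_homogeneous:
  assumes "(P :: (real^'n)\<times>real \<Rightarrow> real) \<in> P_sing"
  shows "P (par_scale r z) = r\<^sup>2 * P z"
proof -
  obtain Q :: "real^'n^'n" and m where P: "P = (\<lambda>z. (1/2) * (fst z \<bullet> (Q *v fst z)) + m * snd z)"
    using P_sing_quadratic[OF assms] by blast
  show ?thesis unfolding P par_scale_def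
    by (simp add: matrix_vector_mult_scaleR power2_eq_square algebra_simps)
qed

lemma scaled_norm_P_sing_diff:
  assumes P: "P \<in> P_sing" and P': "P' \<in> P_sing" and r: "r > 0"
  shows "scaled_norm (\<lambda>z. P z - P' z) r = scaled_norm (\<lambda>z. P z - P' z) 1"
proof -
  have "(\<integral>\<^sup>+ z\<in>S_cyl r. ennreal ((P z - P' z)\<^sup>2) \<partial>gamma_bar)
      = ennreal (r ^ 4) * (\<integral>\<^sup>+ z\<in>S_cyl 1. ennreal ((P z - P' z)\<^sup>2) \<partial>gamma_bar)"
    using P_sing_measurable[OF P] P_sing_measurable[OF P']
    by (intro cyl_integral_homogeneous[OF r])
       (auto simp: P_sing_homogeneous[OF P] P_sing_homogeneous[OF P'] algebra_simps)
  moreover have "ennreal (1 / r ^ 4) * ennreal (r ^ 4) = 1"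
    using r by (simp add: ennreal_mult[symmetric])
  ultimately show ?thesis unfolding scaled_norm_def by (simp add: mult.assoc[symmetric])
qed

section \<open>Chains of near-optimal polynomials\<close>

lemma scaled_norm_telescope:
  fixes u :: "(real^'n)\<times>real \<Rightarrow> real" and P :: "nat \<Rightarrow> (real^'n)\<times>real \<Rightarrow> real"
  assumes um: "u \<in> borel_measurable lebesgue"
    and Pm: "\<And>j. j \<le> k \<Longrightarrow> P j \<in> borel_measurable lebesgue"
  shows "scaled_norm (\<lambda>z. u z - P 0 z) R
      \<le> scaled_norm (\<lambda>z. u z - P k z) R + (\<Sum>j<k. scaled_norm (\<lambda>z. P (Suc j) z - P j z) R)"
  using Pm
proof (induction k)
  case (Suc k)
  have m1: "(\<lambda>z. u z - P (Suc k) z) \<in> borel_measurable lebesgue"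
    using um Suc.prems[of "Suc k"] by measurable
  have m2: "(\<lambda>z. P (Suc k) z - P k z) \<in> borel_measurable lebesgue"
    using Suc.prems[of "Suc k"] Suc.prems[of k] by measurable
  have "scaled_norm (\<lambda>z. u z - P k z) R
      = scaled_norm (\<lambda>z. (u z - P (Suc k) z) + (P (Suc k) z - P k z)) R"
    by simp
  also have "\<dots> \<le> scaled_norm (\<lambda>z. u z - P (Suc k) z) R + scaled_norm (\<lambda>z. P (Suc k) z - P k z) R"
    by (rule scaled_norm_triangle[OF m1 m2])
  finally have "scaled_norm (\<lambda>z. u z - P k z) R + (\<Sum>j<k. scaled_norm (\<lambda>z. P (Suc j) z - P j z) R)
      \<le> scaled_norm (\<lambda>z. u z - P (Suc k) z) R + (\<Sum>j<Suc k. scaled_norm (\<lambda>z. P (Suc j) z - P j z) R)"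
    by (simp add: add_ac add_right_mono)
  with Suc show ?case by (meson le_SucI order_trans)
qed simp

text \<open>Each step \<open>P (j+1) - P j\<close> is measured at the smaller of
  \<open>r j\<close> and \<open>r (j+1)\<close>, which is allowed by scale invariance.\<close>
lemma scaled_norm_chain:
  fixes u :: "(real^'n)\<times>real \<Rightarrow> real" and P :: "nat \<Rightarrow> (real^'n)\<times>real \<Rightarrow> real"
  assumes um: "u \<in> borel_measurable lebesgue"
    and P: "\<And>j. j \<le> K \<Longrightarrow> P j \<in> P_sing"
    and rpos: "\<And>j. j \<le> K \<Longrightarrow> r j > 0"
    and ratio: "\<And>j. j < K \<Longrightarrow> r j \<le> 2 * r (Suc j) \<and> r (Suc j) \<le> 2 * r j"
  shows "scaled_norm (\<lambda>z. u z - P 0 z) (r K) \<le> 9 * (\<Sum>j\<le>K. scaled_norm (\<lambda>z. u z - P j z) (r j))"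
proof -
  define d where "d j = scaled_norm (\<lambda>z. u z - P j z) (r j)" for j
  have Pm: "\<And>j. j \<le> K \<Longrightarrow> P j \<in> borel_measurable lebesgue" using P P_sing_measurable by blast
  have step: "scaled_norm (\<lambda>z. P (Suc j) z - P j z) (r K) \<le> 4 * d j + 4 * d (Suc j)" if j: "j < K" for j
  proof -
    define m where "m = min (r j) (r (Suc j))"
    have m: "m > 0" "m \<le> r j" "r j \<le> 2 * m" "m \<le> r (Suc j)" "r (Suc j) \<le> 2 * m"
      using rpos[of j] rpos[of "Suc j"] ratio[OF j] j by (auto simp: m_def)
    have PS: "P (Suc j) \<in> P_sing" "P j \<in> P_sing" using P j by auto
    have "P j \<in> borel_measurable lebesgue" "P (Suc j) \<in> borel_measurable lebesgue"
      using Pm j by auto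
    then have um1: "(\<lambda>z. u z - P j z) \<in> borel_measurable lebesgue"
      and um2: "(\<lambda>z. P (Suc j) z - u z) \<in> borel_measurable lebesgue"
      using um by measurable
    have "scaled_norm (\<lambda>z. P (Suc j) z - P j z) (r K) = scaled_norm (\<lambda>z. P (Suc j) z - P j z) m"
      using scaled_norm_P_sing_diff[OF PS rpos[of K]] scaled_norm_P_sing_diff[OF PS m(1)] by simp
    also have "\<dots> = scaled_norm (\<lambda>z. (u z - P j z) + (P (Suc j) z - u z)) m" by simp
    also have "\<dots> \<le> scaled_norm (\<lambda>z. u z - P j z) m + scaled_norm (\<lambda>z. u z - P (Suc j) z) m"
      using scaled_norm_triangle[OF um1 um2] by (simp add: scaled_norm_minus_commute)
    also have "\<dots> \<le> 4 * d j + 4 * d (Suc j)"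
      unfolding d_def using m by (intro add_mono scaled_norm_comparable_radii) auto
    finally show ?thesis .
  qed
  have "scaled_norm (\<lambda>z. u z - P 0 z) (r K)
      \<le> d K + (\<Sum>j<K. scaled_norm (\<lambda>z. P (Suc j) z - P j z) (r K))"
    using scaled_norm_telescope[where k=K and R="r K" and P=P, OF um Pm] unfolding d_def by simp
  also have "\<dots> \<le> d K + (\<Sum>j<K. 4 * d j + 4 * d (Suc j))"
    by (intro add_left_mono sum_mono step) simp
  also have "\<dots> = d K + 4 * (\<Sum>j<K. d j) + 4 * (\<Sum>j<K. d (Suc j))"
    by (simp add: sum.distrib sum_distrib_left add.assoc)
  also have "\<dots> \<le> (\<Sum>j\<le>K. d j) + 4 * (\<Sum>j\<le>K. d j) + 4 * (\<Sum>j\<le>K. d j)"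
  proof -
    have "d K \<le> (\<Sum>j\<le>K. d j)" by (rule member_le_sum) auto
    moreover have "(\<Sum>j<K. d j) \<le> (\<Sum>j\<le>K. d j)" by (rule sum_mono2) auto
    moreover have "(\<Sum>j<K. d (Suc j)) \<le> (\<Sum>j\<le>K. d j)"
      using sum.lessThan_Suc_shift[of d K] lessThan_Suc_atMost by (metis add.commute le_iff_add)
    ultimately show ?thesis by (intro add_mono mult_left_mono) auto
  qed
  also have "\<dots> = 9 * (\<Sum>j\<le>K. d j)"
  proof -
    have "(9::ennreal) = 1 + 4 + 4" by simp
    then show ?thesis by (simp only: distrib_right mult_1)
  qed
  finally show ?thesis unfolding d_def .
qed

lemma N_sing_le_M_sing: "0 < r \<Longrightarrow> r \<le> s \<Longrightarrow> N_sing u r \<le> M_sing u s"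
  unfolding M_sing_def by (rule SUP_upper) auto

lemma M_sing_mono: "s \<le> t \<Longrightarrow> M_sing u s \<le> M_sing u t"
  unfolding M_sing_def by (rule SUP_subset_mono) auto

text \<open>The infimum defining \<open>N_sing\<close> is approximately attained (it may be infinite, in which
  case any element of the nonempty class \<open>P_sing\<close> will do).\<close>
lemma N_sing_approx:
  fixes u P1 :: "(real^'n)\<times>real \<Rightarrow> real"
  assumes P1: "P1 \<in> P_sing" and e: "\<epsilon> > 0"
  obtains P where "P \<in> P_sing" "scaled_norm (\<lambda>z. u z - P z) r \<le> N_sing u r + ennreal \<epsilon>"
proof (cases "N_sing u r = top")
  case True then show ?thesis using that P1 by simp
next
  case False
  then obtain x where "N_sing u r = ennreal x" "x \<ge> 0" by (cases "N_sing u r") auto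
  then have "N_sing u r < N_sing u r + ennreal \<epsilon>"
    using e by (simp add: ennreal_plus)
  then obtain P where "P \<in> P_sing" "scaled_norm (\<lambda>z. u z - P z) r < N_sing u r + ennreal \<epsilon>"
    unfolding N_sing_def weighted_dist_eq_scaled_norm by (auto simp: INF_less_iff)
  then show ?thesis using that by simp
qed

lemma sum_plus_const_ennreal:
  assumes "\<epsilon> \<ge> 0"
  shows "(\<Sum>j\<le>K. (a j :: ennreal) + ennreal \<epsilon>) = (\<Sum>j\<le>K. a j) + ennreal ((real K + 1) * \<epsilon>)"
proof -
  have "(\<Sum>j\<le>K. ennreal \<epsilon>) = ennreal (real (Suc K)) * ennreal \<epsilon>"
    by (simp add: ennreal_of_nat_eq_real_of_nat)
  also have "\<dots> = ennreal ((real K + 1) * \<epsilon>)"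
    using assms by (simp add: ennreal_mult add.commute)
  finally show ?thesis by (simp add: sum.distrib)
qed

text \<open>The chain estimate with near-optimal polynomials at every radius except the first,
  where \<open>P1\<close> is optimal by assumption.\<close>
lemma chain_estimate_N_sing:
  fixes u P1 :: "(real^'n)\<times>real \<Rightarrow> real"
  assumes um: "u \<in> borel_measurable lebesgue" and P1: "P1 \<in> P_sing"
    and opt: "scaled_norm (\<lambda>z. u z - P1 z) (r 0) = N_sing u (r 0)"
    and rpos: "\<And>j. j \<le> K \<Longrightarrow> r j > 0"
    and ratio: "\<And>j. j < K \<Longrightarrow> r j \<le> 2 * r (Suc j) \<and> r (Suc j) \<le> 2 * r j"
  shows "scaled_norm (\<lambda>z. u z - P1 z) (r K) \<le> 9 * (\<Sum>j\<le>K. N_sing u (r j))"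
proof (rule ennreal_le_epsilon)
  fix e :: real assume e: "0 < e"
  define \<epsilon> where "\<epsilon> = e / (9 * (real K + 1))"
  have \<epsilon>: "\<epsilon> > 0" using e by (simp add: \<epsilon>_def)
  have "\<forall>j. \<exists>P. P \<in> P_sing \<and> scaled_norm (\<lambda>z. u z - P z) (r j) \<le> N_sing u (r j) + ennreal \<epsilon>"
    by (metis N_sing_approx[OF P1 \<epsilon>])
  then obtain Q where Q: "\<And>j. Q j \<in> P_sing" "\<And>j. scaled_norm (\<lambda>z. u z - Q j z) (r j) \<le> N_sing u (r j) + ennreal \<epsilon>"
    by (metis choice)
  define P where "P j = (if j = 0 then P1 else Q j)" for j
  have P_sing: "P j \<in> P_sing" for j
    using Q(1) P1 by (simp add: P_def)
  have near_opt: "scaled_norm (\<lambda>z. u z - P j z) (r j) \<le> N_sing u (r j) + ennreal \<epsilon>" for j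
    using Q(2)[of j] opt by (cases "j = 0") (simp_all add: P_def)
  have P0: "P 0 = P1" by (simp add: P_def)
  have "scaled_norm (\<lambda>z. u z - P1 z) (r K) \<le> 9 * (\<Sum>j\<le>K. scaled_norm (\<lambda>z. u z - P j z) (r j))"
    using scaled_norm_chain[where K=K and r=r and P=P, OF um P_sing rpos ratio] unfolding P0 .
  also have "\<dots> \<le> 9 * (\<Sum>j\<le>K. N_sing u (r j) + ennreal \<epsilon>)"
    by (intro mult_left_mono sum_mono near_opt) simp
  also have "\<dots> = 9 * (\<Sum>j\<le>K. N_sing u (r j)) + 9 * ennreal ((real K + 1) * \<epsilon>)"
    using \<epsilon> by (simp only: sum_plus_const_ennreal less_imp_le distrib_left)
  also have "9 * ennreal ((real K + 1) * \<epsilon>) = ennreal e"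
  proof -
    have "e = 9 * ((real K + 1) * \<epsilon>)" by (simp add: \<epsilon>_def field_simps)
    then have "ennreal e = ennreal 9 * ennreal ((real K + 1) * \<epsilon>)"
      using \<epsilon> by (metis ennreal_mult less_imp_le mult_nonneg_nonneg of_nat_0_le_iff
          zero_le_numeral add_nonneg_nonneg zero_le_one)
    then show ?thesis by simp
  qed
  finally show "scaled_norm (\<lambda>z. u z - P1 z) (r K) \<le> 9 * (\<Sum>j\<le>K. N_sing u (r j)) + ennreal e" .
qed

section \<open>Comparing sums over well-separated scales with the logarithmic integral\<close>

text \<open>If the intervals \<open>[b j, 3/2 b j]\<close> are pairwise disjoint and contained in \<open>[A, B]\<close>, and
  G is nondecreasing to the right of each \<open>b j\<close>, then \<open>\<Sum> G (b j)\<close> is at most 3 times the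
  integral of G s / s over [A, B]: on \<open>[b j, 3/2 b j]\<close> the integrand is at least
  \<open>G (b j) * 2/(3 b j)\<close> and the interval has length \<open>b j / 2\<close>.\<close>
lemma sum_le_log_integral:
  fixes G :: "real \<Rightarrow> ennreal" and b :: "nat \<Rightarrow> real" and J :: "nat set"
  assumes J: "finite J"
    and pos: "\<And>j. j \<in> J \<Longrightarrow> b j > 0"
    and disj: "\<And>i j. i \<in> J \<Longrightarrow> j \<in> J \<Longrightarrow> i < j \<Longrightarrow> 3/2 * b i < b j \<or> 3/2 * b j < b i"
    and sub: "\<And>j. j \<in> J \<Longrightarrow> A \<le> b j \<and> 3/2 * b j \<le> B"
    and Gm: "\<And>j s. j \<in> J \<Longrightarrow> b j \<le> s \<Longrightarrow> G (b j) \<le> G s"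
  shows "(\<Sum>j\<in>J. G (b j)) \<le> 3 * (\<integral>\<^sup>+ s\<in>{A..B}. G s * ennreal (1 / s) \<partial>lborel)"
proof -
  define I where "I j = {b j .. 3/2 * b j}" for j
  define c where "c j = G (b j) * ennreal (2 / (3 * b j))" for j
  define h where "h s = (\<Sum>j\<in>J. c j * indicator (I j) s)" for s
  have disjoint: "s \<notin> I j" if "i \<in> J" "j \<in> J" "i \<noteq> j" "s \<in> I i" for i j s
    using that disj[of i j] disj[of j i] by (cases "i < j") (auto simp: I_def)
  have "(\<integral>\<^sup>+ s. h s \<partial>lborel) = (\<Sum>j\<in>J. c j * emeasure lborel (I j))"
    unfolding h_def by (subst nn_integral_sum) (auto simp: I_def nn_integral_cmult_indicator)
  also have "\<dots> = (\<Sum>j\<in>J. G (b j) * ennreal (1/3))"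
  proof (rule sum.cong[OF refl])
    fix j assume j: "j \<in> J"
    have bj: "b j > 0" using pos j by simp
    have "emeasure lborel (I j) = ennreal (b j / 2)" using bj by (simp add: I_def)
    moreover have "ennreal (2 / (3 * b j)) * ennreal (b j / 2) = ennreal (1/3)"
      using bj by (simp add: ennreal_mult[symmetric])
    ultimately show "c j * emeasure lborel (I j) = G (b j) * ennreal (1/3)"
      by (simp add: c_def mult.assoc)
  qed
  finally have integral_h: "(\<integral>\<^sup>+ s. h s \<partial>lborel) = (\<Sum>j\<in>J. G (b j)) * ennreal (1/3)"
    by (simp add: sum_distrib_right)
  have "(\<integral>\<^sup>+ s. h s \<partial>lborel) \<le> (\<integral>\<^sup>+ s\<in>{A..B}. G s * ennreal (1 / s) \<partial>lborel)"
  proof (rule nn_integral_mono)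
    fix s
    show "h s \<le> G s * ennreal (1 / s) * indicator {A..B} s"
    proof (cases "\<exists>j\<in>J. s \<in> I j")
      case True
      then obtain j0 where j0: "j0 \<in> J" "s \<in> I j0" by blast
      have bj: "b j0 > 0" using pos j0 by simp
      have "h s = c j0 * indicator (I j0) s + (\<Sum>j\<in>J - {j0}. c j * indicator (I j) s)"
        unfolding h_def by (rule sum.remove[OF J j0(1)])
      also have "(\<Sum>j\<in>J - {j0}. c j * indicator (I j) s) = 0"
        using disjoint[of j0 _ s] j0 by (intro sum.neutral) auto
      finally have hs: "h s = c j0" using j0 by simp
      have "s \<in> {A..B}" using sub[OF j0(1)] j0(2) by (auto simp: I_def)
      moreover have "G (b j0) \<le> G s" using Gm[OF j0(1)] j0(2) by (auto simp: I_def)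
      moreover have "2 / (3 * b j0) \<le> 1 / s"
        using j0(2) bj by (auto simp: I_def divide_simps)
      ultimately show ?thesis
        unfolding hs c_def by (auto intro!: mult_mono ennreal_leI)
    next
      case False
      then have "h s = 0" unfolding h_def by (intro sum.neutral) auto
      then show ?thesis by simp
    qed
  qed
  moreover have "(\<Sum>j\<in>J. G (b j)) = 3 * ((\<Sum>j\<in>J. G (b j)) * ennreal (1/3))"
  proof -
    have "(3::ennreal) * ennreal (1/3) = 1"
      by (simp add: ennreal_mult[symmetric] flip: ennreal_numeral)
    then show ?thesis by (metis mult.assoc mult.commute mult_1)
  qed
  ultimately show ?thesis unfolding integral_h by (metis mult_left_mono zero_le)
qed

lemma dyadic_bracket:
  fixes x :: real
  assumes "x \<ge> 1"
  obtains k :: nat where "2 ^ k \<le> x" "x < 2 ^ Suc k"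
proof -
  define k where "k = nat \<lfloor>log 2 x\<rfloor>"
  have "\<lfloor>log 2 x\<rfloor> \<ge> 0" using assms by simp
  then have "\<lfloor>log 2 x\<rfloor> = int k" by (simp add: k_def)
  then have "2 powr real k \<le> x \<and> x < 2 powr (real k + 1)"
    using floor_log_eq_powr_iff[of x 2 "int k"] assms by simp
  moreover have "(2::real) powr (real k + 1) = 2 ^ Suc k" by (simp add: powr_add powr_realpow)
  ultimately show ?thesis using that by (auto simp: powr_realpow)
qed

section \<open>Growth of the distance to the optimal polynomial\<close>

text \<open>Large scales: radii 1, 2, ..., 2^k, rho with 2^k <= rho < 2^(k+1).\<close>
lemma growth_large_scales:
  fixes u P1 :: "(real^'n)\<times>real \<Rightarrow> real"
  assumes um: "u \<in> borel_measurable lebesgue" and P1: "P1 \<in> P_sing"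
    and opt: "scaled_norm (\<lambda>z. u z - P1 z) 1 = N_sing u 1"
    and \<rho>: "\<rho> \<ge> 1"
  shows "scaled_norm (\<lambda>z. u z - P1 z) \<rho> \<le> 108 * (\<integral>\<^sup>+ s\<in>{1..2*\<rho>}. M_sing u s * ennreal (1 / s) \<partial>lborel)"
proof -
  obtain k where k: "2 ^ k \<le> \<rho>" "\<rho> < 2 ^ Suc k" using dyadic_bracket[OF \<rho>] .
  define r where "r j = (if j \<le> k then (2::real) ^ j else \<rho>)" for j
  define I where "I = (\<integral>\<^sup>+ s\<in>{1..2*\<rho>}. M_sing u s * ennreal (1 / s) \<partial>lborel)"
  have ratio: "r j \<le> 2 * r (Suc j) \<and> r (Suc j) \<le> 2 * r j" if "j < Suc k" for j
    using that k by (cases "j = k") (auto simp: r_def)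
  have "(\<Sum>j\<le>k. N_sing u (2 ^ j)) \<le> (\<Sum>j\<le>k. M_sing u (2 ^ j))"
    by (intro sum_mono N_sing_le_M_sing) auto
  also have "\<dots> \<le> 3 * I" unfolding I_def
  proof (rule sum_le_log_integral)
    fix i j :: nat assume "i < j"
    then have "2 * (2::real) ^ i \<le> 2 ^ j" by (metis Suc_leI one_le_numeral power_Suc power_increasing)
    moreover have "(0::real) < 2 ^ i" by simp
    ultimately show "3/2 * (2::real) ^ i < 2 ^ j \<or> 3/2 * (2::real) ^ j < 2 ^ i" by linarith
  next
    fix j assume "j \<in> {..k}"
    then have "(2::real) ^ j \<le> 2 ^ k" by (intro power_increasing) auto
    moreover have "1 \<le> (2::real) ^ j" by simp
    ultimately show "1 \<le> (2::real) ^ j \<and> 3/2 * 2 ^ j \<le> 2 * \<rho>" using k by linarith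
  qed (auto intro: M_sing_mono)
  finally have dyadic: "(\<Sum>j\<le>k. N_sing u (2 ^ j)) \<le> 3 * I" .
  have "N_sing u \<rho> \<le> (\<Sum>j\<in>{0::nat}. M_sing u \<rho>)"
    using \<rho> by (simp add: N_sing_le_M_sing)
  also have "\<dots> \<le> 3 * I" unfolding I_def
    by (rule sum_le_log_integral) (use \<rho> in \<open>auto intro: M_sing_mono\<close>)
  finally have last: "N_sing u \<rho> \<le> 3 * I" .
  have "scaled_norm (\<lambda>z. u z - P1 z) (r (Suc k)) \<le> 9 * (\<Sum>j\<le>Suc k. N_sing u (r j))"
    using \<rho> opt by (intro chain_estimate_N_sing[OF um P1] ratio) (auto simp: r_def)
  also have "(\<Sum>j\<le>Suc k. N_sing u (r j)) = (\<Sum>j\<le>k. N_sing u (2 ^ j)) + N_sing u \<rho>"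
    by (simp add: r_def)
  also have "9 * \<dots> \<le> 9 * (3 * I + 3 * I)"
    by (intro mult_left_mono add_mono dyadic last) auto
  also have "\<dots> = 54 * I"
  proof -
    have "(3::ennreal) * I + 3 * I = 6 * I" by (simp add: distrib_right[symmetric])
    then show ?thesis by (simp add: mult.assoc[symmetric])
  qed
  also have "\<dots> \<le> 108 * I"
    by (intro mult_right_mono) auto
  finally show ?thesis by (simp add: r_def I_def)
qed

text \<open>Small scales: radii 1, 1/2, ..., 2^-L with 2^-(L+1) < rho <= 2^-L.\<close>
lemma growth_small_scales:
  fixes u P1 :: "(real^'n)\<times>real \<Rightarrow> real"
  assumes um: "u \<in> borel_measurable lebesgue" and P1: "P1 \<in> P_sing"
    and opt: "scaled_norm (\<lambda>z. u z - P1 z) 1 = N_sing u 1"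
    and \<rho>: "0 < \<rho>" "\<rho> \<le> 1"
  shows "scaled_norm (\<lambda>z. u z - P1 z) \<rho> \<le> 108 * (\<integral>\<^sup>+ s\<in>{2*\<rho>..3}. M_sing u s * ennreal (1 / s) \<partial>lborel)"
proof -
  obtain L where L: "2 ^ L \<le> 1 / \<rho>" "1 / \<rho> < 2 ^ Suc L"
    using dyadic_bracket[of "1 / \<rho>"] \<rho> by auto
  define r where "r j = (1/2::real) ^ j" for j
  define I where "I = (\<integral>\<^sup>+ s\<in>{2*\<rho>..3}. M_sing u s * ennreal (1 / s) \<partial>lborel)"
  have rL: "\<rho> \<le> r L" "r L \<le> 2 * \<rho>"
    using L \<rho> by (auto simp: r_def power_one_over field_simps)
  have "(\<Sum>j\<le>L. N_sing u (r j)) \<le> (\<Sum>j\<le>L. M_sing u (2 * (1/2::real) ^ j))"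
    by (intro sum_mono N_sing_le_M_sing) (auto simp: r_def)
  also have "\<dots> \<le> 3 * I" unfolding I_def
  proof (rule sum_le_log_integral)
    fix i j :: nat assume "i < j"
    then have "(1/2::real) ^ j \<le> (1/2) ^ Suc i" by (intro power_decreasing) auto
    then have "2 * (1/2::real) ^ j \<le> (1/2) ^ i" by simp
    moreover have "(0::real) < (1/2) ^ j" by simp
    ultimately have "3/2 * (2 * (1/2::real) ^ j) < 2 * (1/2) ^ i" by linarith
    then show "3/2 * (2 * (1/2::real) ^ i) < 2 * (1/2) ^ j \<or> 3/2 * (2 * (1/2::real) ^ j) < 2 * (1/2) ^ i" ..
  next
    fix j assume "j \<in> {..L}"
    then have "(1/2::real) ^ L \<le> (1/2) ^ j" by (intro power_decreasing) auto
    moreover have "(1/2::real) ^ j \<le> 1" by (rule power_le_one) auto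
    ultimately show "2 * \<rho> \<le> 2 * (1/2::real) ^ j \<and> 3/2 * (2 * (1/2::real) ^ j) \<le> 3"
      using rL unfolding r_def by linarith
  qed (auto intro: M_sing_mono)
  finally have dyadic: "(\<Sum>j\<le>L. N_sing u (r j)) \<le> 3 * I" .
  have "scaled_norm (\<lambda>z. u z - P1 z) \<rho> \<le> 4 * scaled_norm (\<lambda>z. u z - P1 z) (r L)"
    using \<rho> rL by (intro scaled_norm_comparable_radii) auto
  also have "\<dots> \<le> 4 * (9 * (\<Sum>j\<le>L. N_sing u (r j)))"
    using opt by (intro mult_left_mono chain_estimate_N_sing[OF um P1]) (auto simp: r_def)
  also have "\<dots> \<le> 4 * (9 * (3 * I))"
    by (intro mult_left_mono dyadic) auto
  also have "\<dots> = 108 * I" by (simp add: mult.assoc[symmetric])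
  finally show ?thesis unfolding I_def .
qed

text \<open>The theorem holds with C = 108.\<close>
theorem lemma5p9:
  "\<exists>C::real. \<forall>(u :: (real ^ 'n) \<times> real \<Rightarrow> real) P1.
     u \<in> borel_measurable lebesgue \<longrightarrow>
     (\<forall>\<rho>>0. (\<integral>\<^sup>+ z \<in> S_cyl \<rho>. ennreal ((u z)\<^sup>2) \<partial>gamma_bar) < \<infinity>) \<longrightarrow>
     P1 \<in> P_sing \<longrightarrow>
     N_sing u 1 = enn_sqrt (\<integral>\<^sup>+ z \<in> S_cyl 1. ennreal ((u z - P1 z)\<^sup>2) \<partial>gamma_bar) \<longrightarrow>
     (\<forall>\<rho>\<ge>1. weighted_dist u P1 \<rho> \<le>
          ennreal C * (\<integral>\<^sup>+ s \<in> {1..2*\<rho>}. M_sing u s * ennreal (1 / s) \<partial>lborel)) \<and>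
     (\<forall>\<rho>. 0 < \<rho> \<and> \<rho> \<le> 1 \<longrightarrow> weighted_dist u P1 \<rho> \<le>
          ennreal C * (\<integral>\<^sup>+ s \<in> {2*\<rho>..3}. M_sing u s * ennreal (1 / s) \<partial>lborel))"
proof (intro exI[of _ 108] allI impI)
  fix u P1 :: "(real ^ 'n) \<times> real \<Rightarrow> real"
  assume um: "u \<in> borel_measurable lebesgue" and P1: "P1 \<in> P_sing"
    and "N_sing u 1 = enn_sqrt (\<integral>\<^sup>+ z \<in> S_cyl 1. ennreal ((u z - P1 z)\<^sup>2) \<partial>gamma_bar)"
  then have opt: "scaled_norm (\<lambda>z. u z - P1 z) 1 = N_sing u 1"
    by (simp add: scaled_norm_def)
  show "(\<forall>\<rho>\<ge>1. weighted_dist u P1 \<rho> \<le>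
          ennreal 108 * (\<integral>\<^sup>+ s \<in> {1..2*\<rho>}. M_sing u s * ennreal (1 / s) \<partial>lborel)) \<and>
     (\<forall>\<rho>. 0 < \<rho> \<and> \<rho> \<le> 1 \<longrightarrow> weighted_dist u P1 \<rho> \<le>
          ennreal 108 * (\<integral>\<^sup>+ s \<in> {2*\<rho>..3}. M_sing u s * ennreal (1 / s) \<partial>lborel))"
    using growth_large_scales[OF um P1 opt] growth_small_scales[OF um P1 opt]
    by (simp add: weighted_dist_eq_scaled_norm)
qed

end
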